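(* Let $L:\mathbb{T}^d\times\mathbb{R}^d\to\mathbb{R}$ be continuous with $\lim_{|v|\to\infty}\inf_{x}L(x,v)/|v|=+\infty$. Let $(\varphi,\overline{H})$ be a subsolution to $H(x,-\nabla\varphi)=\overline{H}$, where $\varphi$ is Lipschitz continuous with constant $K$. Let $\eta\in C^\infty(\mathbb{R}^d)$ be a smoothing kernel (nonnegative, vanishing outside the unit ball $\mathbbm{B}_1$, with $\int\eta=1$), set $\eta_\delta(w)=\delta^{-d}\eta(w/\delta)$ and $\varphi^{(\delta)}(x)=\int_{\mathbb{R}^d}\varphi(x-w)\eta_\delta(w)\,dw$ for $\delta>0$. Then $(\varphi^{(\delta)},\overline{H}+\omega_{C_3}(\delta))$ is a subsolution to $H(x,-\nabla\varphi^{(\delta)})=\overline{H}+\omega_{C_3}(\delta)$.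
   Context: $\mathbb{T}^d=\mathbb{R}^d/\mathbb{Z}^d$; $x+v$ is the translate of $x\in\mathbb{T}^d$ by $v\in\mathbb{R}^d$; $\rho_{\mathbb{T}^d}(x,y)=\inf\{|v|:x+v=y\}$. $H(x,p)=\max_{v\in\mathbb{R}^d}[pv-L(x,v)]$. Hadamard superdifferential: $p\in\partial_D^+\phi(x)$ iff for all $w$, $\limsup_{h\downarrow0,w'\to w}\frac{\phi(x+hw')-\phi(x)}{h}\le pw$. A pair $(\phi,c)$, $\phi$ upper semicontinuous, $c\in\mathbb{R}$, is a subsolution to $H(x,-\nabla\phi)=c$ if $H(x,-p)\le c$ for all $x$ and $p\in\partial_D^+\phi(x)$. For $A\ge0$, $\omega_A(\delta)=\sup\{|L(x,v)-L(y,v)|: x,y\in\mathbb{T}^d,\ \rho_{\mathbb{T}^d}(x,y)\le\delta,\ |v|\le A\}$. The constant $C_3$: let $C_1'=\sup_{y\in\mathbb{T}^d}|L(y,0)|$, let $c\ge0$ be such that $L(x,v)\ge(K+C_1'+1)|v|$ whenever $|v|\ge c$, and $C_3=\max(c,1)$. *)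

theory Defs
  imports "HOL-Analysis.Analysis"
begin

text \<open>Points of the torus T^d are represented by points of R^d = real^'d;
  functions on T^d are represented by Z^d-periodic functions on R^d.\<close>

definition int_lattice :: "(real^'d) set" where
  "int_lattice = {z. \<forall>i. z $ i \<in> \<int>}"

definition periodic_fun :: "(real^'d \<Rightarrow> 'b) \<Rightarrow> bool" where
  "periodic_fun f \<longleftrightarrow> (\<forall>x z. z \<in> int_lattice \<longrightarrow> f (x + z) = f x)"

definition torus_dist :: "real^'d \<Rightarrow> real^'d \<Rightarrow> real" where
  "torus_dist x y = Inf {norm v | v. x + v - y \<in> int_lattice}"

definition upper_semicont :: "(real^'d \<Rightarrow> real) \<Rightarrow> bool" where
  "upper_semicont f \<longleftrightarrow> (\<forall>a. open {x. f x < a})"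

definition Ham :: "(real^'d \<Rightarrow> real^'d \<Rightarrow> real) \<Rightarrow> real^'d \<Rightarrow> real^'d \<Rightarrow> real" where
  "Ham L x p = (SUP v. p \<bullet> v - L x v)"

text \<open>Hadamard superdifferential, with the limsup written out.\<close>
definition hadamard_superdiff :: "(real^'d \<Rightarrow> real) \<Rightarrow> real^'d \<Rightarrow> (real^'d) set" where
  "hadamard_superdiff \<phi> x = {p. \<forall>w. \<forall>\<epsilon>>0. \<exists>r>0. \<forall>h w'. 0 < h \<and> h < r \<and> norm (w' - w) < r \<longrightarrow>
        (\<phi> (x + h *\<^sub>R w') - \<phi> x) / h \<le> p \<bullet> w + \<epsilon>}"

definition subsolution :: "(real^'d \<Rightarrow> real^'d \<Rightarrow> real) \<Rightarrow> (real^'d \<Rightarrow> real) \<Rightarrow> real \<Rightarrow> bool" where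
  "subsolution L \<phi> c \<longleftrightarrow> upper_semicont \<phi> \<and>
     (\<forall>x. \<forall>p \<in> hadamard_superdiff \<phi> x. Ham L x (- p) \<le> c)"

definition omega :: "(real^'d \<Rightarrow> real^'d \<Rightarrow> real) \<Rightarrow> real \<Rightarrow> real \<Rightarrow> real" where
  "omega L A \<delta> = Sup {\<bar>L x v - L y v\<bar> | x y v. torus_dist x y \<le> \<delta> \<and> norm v \<le> A}"

coinductive smooth_fun :: "(real^'d \<Rightarrow> real) \<Rightarrow> bool" where
  "(\<forall>x. f differentiable (at x)) \<Longrightarrow>
   (\<forall>i. smooth_fun (\<lambda>x. frechet_derivative f (at x) (axis i 1))) \<Longrightarrow> smooth_fun f"

definition mollify :: "(real^'d \<Rightarrow> real) \<Rightarrow> real \<Rightarrow> (real^'d \<Rightarrow> real) \<Rightarrow> real^'d \<Rightarrow> real" where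
  "mollify \<eta> \<delta> \<phi> x =
     integral UNIV (\<lambda>w. \<phi> (x - w) * (inverse (\<delta> ^ CARD('d)) * \<eta> (inverse \<delta> *\<^sub>R w)))"

end

theory Submission
  imports Defs
begin

text \<open>
  The mollification f of phi is again K-Lipschitz, so every p in the superdifferential of f
  satisfies |p| <= K, and by the superlinear growth of L only velocities |v| <= C_3 matter in
  H(x,-p). For such a velocity, maximizing phi(z) + A t - |z - (y + t v)|^2 / (2 eps) over
  t in [0,h] produces a point near the segment where the paraboloid touches phi from above; the
  subsolution inequality at that point shows that phi decreases along y + t v at rate at most
  Hbar plus the values of L(., v) near the segment. Applying this to all translates x - w with
  |w| <= delta, averaging against eta_delta and comparing L(z, v) with L(x, v) at the cost
  omega_{C_3}(delta) bounds f(x) - f(x + h v), which yields -p.v - L(x,v) <= Hbar + omega_{C_3}(delta).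
\<close>

section \<open>The torus\<close>

lemma torus_dist_le_norm: "torus_dist x y \<le> norm (y - x)"
  unfolding torus_dist_def
proof (rule cInf_lower)
  show "norm (y - x) \<in> {norm v |v. x + v - y \<in> int_lattice}"
    by (force simp: int_lattice_def)
  show "bdd_below {norm v |v. x + v - y \<in> int_lattice}"
    by (rule bdd_belowI[of _ 0]) auto
qed

lemma torus_dist_axis_half: "1/2 \<le> torus_dist 0 (axis i (1/2) :: real^'d)"
  unfolding torus_dist_def
proof (rule cInf_greatest)
  show "{norm v |v. 0 + v - axis i (1/2) \<in> int_lattice} \<noteq> {}"
    by (auto simp: int_lattice_def intro!: exI[of _ "axis i (1/2)"])
next
  fix a assume "a \<in> {norm v |v. (0::real^'d) + v - axis i (1/2) \<in> int_lattice}"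
  then obtain v where a: "a = norm v" and v: "v - axis i (1/2) \<in> int_lattice" by auto
  have "(v - axis i (1/2)) $ i \<in> \<int>" using v unfolding int_lattice_def by blast
  then have "v $ i - 1/2 \<in> \<int>" by (simp add: axis_def)
  then obtain n where n: "v $ i - 1/2 = of_int n" by (auto elim: Ints_cases)
  have "1/2 \<le> \<bar>v $ i\<bar>"
  proof (cases "n \<ge> 0")
    case True then have "(of_int n::real) \<ge> 0" by simp
    then show ?thesis using n by linarith
  next
    case False then have "(of_int n::real) \<le> -1" by simp
    then show ?thesis using n by linarith
  qed
  also have "\<dots> \<le> norm v" by (rule component_le_norm_cart)
  finally show "1/2 \<le> a" using a by simp
qed

lemma torus_lipschitz_const_nonneg:
  fixes \<phi> :: "real^'d \<Rightarrow> real"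
  assumes "\<forall>x y. \<bar>\<phi> x - \<phi> y\<bar> \<le> K * torus_dist x y"
  shows "0 \<le> K"
proof -
  obtain i :: 'd where True by simp
  have "0 \<le> K * torus_dist 0 (axis i (1/2) :: real^'d)"
    using assms by (meson abs_ge_zero order_trans)
  with torus_dist_axis_half[of i] show ?thesis
    by (auto simp: zero_le_mult_iff)
qed

lemma periodic_fun_reduce_unit_cube:
  assumes "periodic_fun f"
  obtains x0 where "x0 \<in> cbox 0 (\<chi> i. 1)" "f (x::real^'d) = f x0"
proof
  let ?z = "\<chi> i. real_of_int \<lfloor>x $ i\<rfloor>"
  have "?z \<in> int_lattice" by (simp add: int_lattice_def)
  then show "f x = f (x - ?z)"
    using assms unfolding periodic_fun_def by (metis diff_add_cancel)
  show "x - ?z \<in> cbox 0 (\<chi> i. 1)"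
    unfolding mem_box_cart
    by (simp add: frac_def[symmetric] frac_ge_0 frac_lt_1 less_imp_le)
qed

lemma periodic_continuous_bounded:
  fixes L :: "real^'d \<Rightarrow> real^'d \<Rightarrow> real"
  assumes cont: "continuous_on UNIV (\<lambda>(x, v). L x v)"
    and per: "\<forall>v. periodic_fun (\<lambda>x. L x v)"
  obtains B where "\<And>x v. norm v \<le> A \<Longrightarrow> \<bar>L x v\<bar> \<le> B"
proof -
  have "compact ((\<lambda>(x, v). L x v) ` (cbox 0 (\<chi> i. 1) \<times> cball 0 A))"
    by (intro compact_continuous_image continuous_on_subset[OF cont] compact_Times) auto
  then obtain B where B: "\<forall>y\<in>(\<lambda>(x, v). L x v) ` (cbox 0 (\<chi> i. 1) \<times> cball 0 A). norm y \<le> B"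
    using compact_imp_bounded bounded_iff by metis
  show ?thesis
  proof
    fix x v :: "real^'d" assume "norm v \<le> A"
    moreover obtain x0 where "x0 \<in> cbox 0 (\<chi> i. 1)" "L x v = L x0 v"
      using periodic_fun_reduce_unit_cube[OF per[rule_format, of v]] by blast
    ultimately show "\<bar>L x v\<bar> \<le> B" using B by force
  qed
qed

lemma torus_lipschitz_imp_lipschitz_on:
  fixes \<phi> :: "real^'d \<Rightarrow> real"
  assumes lip: "\<forall>x y. \<bar>\<phi> x - \<phi> y\<bar> \<le> K * torus_dist x y"
  shows "K-lipschitz_on UNIV \<phi>"
proof (rule lipschitz_onI)
  show K: "0 \<le> K" using lip by (rule torus_lipschitz_const_nonneg)
  fix x y :: "real^'d"
  have "\<bar>\<phi> x - \<phi> y\<bar> \<le> K * torus_dist x y" using lip by blast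
  also have "\<dots> \<le> K * norm (y - x)" using torus_dist_le_norm K by (rule mult_left_mono)
  finally show "dist (\<phi> x) (\<phi> y) \<le> K * dist x y" by (simp add: dist_real_def dist_norm norm_minus_commute)
qed

section \<open>Hadamard superdifferentials\<close>

lemma hadamard_superdiffI_quadratic:
  fixes \<phi> :: "real^'d \<Rightarrow> real"
  assumes C: "0 \<le> C"
    and Q: "\<And>z'. norm (z' - z) < 1 \<Longrightarrow> \<phi> z' - \<phi> z \<le> p \<bullet> (z' - z) + C * (norm (z' - z))\<^sup>2"
  shows "p \<in> hadamard_superdiff \<phi> z"
  unfolding hadamard_superdiff_def
proof (intro CollectI allI impI)
  fix w :: "real^'d" and \<epsilon> :: real assume \<epsilon>: "0 < \<epsilon>"
  define D where "D = norm p + C * (norm w + 1)\<^sup>2 + 1"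
  define r where "r = min (1 / (norm w + 1)) (\<epsilon> / D)"
  have nw1: "norm w + 1 > 0" using norm_ge_zero[of w] by linarith
  have D: "D \<ge> 1" unfolding D_def using C by simp
  have r0: "r > 0" unfolding r_def using \<epsilon> D nw1 by simp
  have r1: "r * (norm w + 1) \<le> 1" and r2: "r * D \<le> \<epsilon>"
    using nw1 D by (auto simp: r_def min_def field_simps)
  show "\<exists>r>0. \<forall>h w'. 0 < h \<and> h < r \<and> norm (w' - w) < r \<longrightarrow>
        (\<phi> (z + h *\<^sub>R w') - \<phi> z) / h \<le> p \<bullet> w + \<epsilon>"
  proof (intro exI[of _ r] conjI allI impI r0)
    fix h and w' :: "real^'d" assume hw: "0 < h \<and> h < r \<and> norm (w' - w) < r"
    have "r * 1 \<le> r * (norm w + 1)" using r0 by (intro mult_left_mono) auto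
    then have "r \<le> 1" using r1 by simp
    then have nw': "norm w' \<le> norm w + 1" using hw norm_triangle_ineq2[of w' w] by linarith
    have "h * norm w' \<le> h * (norm w + 1)" using hw nw' by (intro mult_left_mono) auto
    also have "\<dots> < r * (norm w + 1)" using hw nw1 by simp
    finally have "h * norm w' < 1" using r1 by simp
    then have "\<phi> (z + h *\<^sub>R w') - \<phi> z \<le> p \<bullet> (h *\<^sub>R w') + C * (norm (h *\<^sub>R w'))\<^sup>2"
      using Q[of "z + h *\<^sub>R w'"] hw by simp
    also have "\<dots> = h * (p \<bullet> w' + C * h * (norm w')\<^sup>2)"
      using hw by (simp add: power2_eq_square algebra_simps)
    finally have quot: "(\<phi> (z + h *\<^sub>R w') - \<phi> z) / h \<le> p \<bullet> w' + C * h * (norm w')\<^sup>2"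
      using hw by (simp add: divide_le_eq mult.commute)
    have "p \<bullet> (w' - w) \<le> norm p * norm (w' - w)" by (rule norm_cauchy_schwarz)
    also have "\<dots> \<le> norm p * r" using hw by (intro mult_left_mono) auto
    finally have "p \<bullet> (w' - w) \<le> norm p * r" .
    moreover have "C * h * (norm w')\<^sup>2 \<le> C * r * (norm w + 1)\<^sup>2"
      using hw C nw' by (intro mult_mono power_mono) auto
    ultimately have "p \<bullet> w' + C * h * (norm w')\<^sup>2 \<le> p \<bullet> w + r * D"
      using r0 unfolding D_def by (simp add: inner_diff_right algebra_simps)
    then show "(\<phi> (z + h *\<^sub>R w') - \<phi> z) / h \<le> p \<bullet> w + \<epsilon>" using quot r2 by linarith
  qed
qed

lemma hadamard_superdiff_neg_inner_le_rate:
  fixes f :: "real^'d \<Rightarrow> real" and B :: real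
  assumes p: "p \<in> hadamard_superdiff f x"
    and decrease: "\<And>e. 0 < e \<Longrightarrow> \<forall>\<^sub>F h in at_right 0. f x - f (x + h *\<^sub>R v) \<le> h * (B + e)"
  shows "- (p \<bullet> v) \<le> B"
proof (rule field_le_epsilon)
  fix e :: real assume "0 < e"
  then obtain r where r: "r > 0" "\<forall>h w'. 0 < h \<and> h < r \<and> norm (w' - v) < r \<longrightarrow>
      (f (x + h *\<^sub>R w') - f x) / h \<le> p \<bullet> v + e / 2"
    using p \<open>0 < e\<close> half_gt_zero unfolding hadamard_superdiff_def by blast
  have "\<forall>\<^sub>F h in at_right 0. h < r"
    unfolding eventually_at_right_field using r(1) by blast
  then have "\<forall>\<^sub>F h in at_right 0. 0 < h \<and> h < r \<and> f x - f (x + h *\<^sub>R v) \<le> h * (B + e / 2)"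
    using eventually_at_right_less decrease[of "e / 2"] \<open>0 < e\<close>
    by (intro eventually_conj) auto
  then obtain h where h: "0 < h" "h < r" "f x - f (x + h *\<^sub>R v) \<le> h * (B + e / 2)"
    using eventually_happens trivial_limit_at_right_real by blast
  then have "(f (x + h *\<^sub>R v) - f x) / h \<le> p \<bullet> v + e / 2" using r by auto
  moreover have "- (B + e / 2) \<le> (f (x + h *\<^sub>R v) - f x) / h"
    using h by (simp add: field_simps)
  ultimately show "- (p \<bullet> v) \<le> B + e" by linarith
qed

lemma hadamard_superdiff_norm_le_lipschitz:
  assumes lip: "K-lipschitz_on UNIV f" and p: "p \<in> hadamard_superdiff f x"
  shows "norm p \<le> K"
proof -
  have K: "0 \<le> K" using lip by (rule lipschitz_on_nonneg)
  have "- (p \<bullet> - p) \<le> K * norm p"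
  proof (rule hadamard_superdiff_neg_inner_le_rate[OF p])
    fix e :: real assume "0 < e"
    have "f x - f (x + h *\<^sub>R - p) \<le> h * (K * norm p + e)" if "0 < h" for h
    proof -
      have "f x - f (x + h *\<^sub>R - p) \<le> dist (f x) (f (x + h *\<^sub>R - p))"
        by (simp add: dist_real_def)
      also have "\<dots> \<le> K * dist x (x + h *\<^sub>R - p)"
        by (rule lipschitz_onD[OF lip]) auto
      also have "\<dots> = h * (K * norm p)" using that by (simp add: dist_norm)
      also have "\<dots> \<le> h * (K * norm p + e)" using that \<open>0 < e\<close> by simp
      finally show ?thesis .
    qed
    with eventually_at_right_less
    show "\<forall>\<^sub>F h in at_right 0. f x - f (x + h *\<^sub>R - p) \<le> h * (K * norm p + e)"
      by (rule eventually_mono)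
  qed
  then have "norm p * norm p \<le> K * norm p" by (simp add: dot_square_norm power2_eq_square)
  then show ?thesis using K by (cases "norm p = 0") (auto intro: mult_right_le_imp_le)
qed

section \<open>Penalization along a segment\<close>

lemma norm_add_power2_div_diff:
  fixes u w :: "'a::real_inner"
  assumes "\<epsilon> \<noteq> 0"
  shows "(norm (u + w))\<^sup>2 / (2 * \<epsilon>) - (norm u)\<^sup>2 / (2 * \<epsilon>) = ((1 / \<epsilon>) *\<^sub>R u) \<bullet> w + (norm w)\<^sup>2 / (2 * \<epsilon>)"
  using assms dot_norm[of u w] by (simp add: field_simps)

lemma hadamard_superdiffI_touching_paraboloid:
  fixes \<phi> :: "real^'d \<Rightarrow> real"
  assumes \<epsilon>: "0 < \<epsilon>"
    and max: "\<And>z'. norm (z' - z) < 1 \<Longrightarrow>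
                \<phi> z' - (norm (z' - a))\<^sup>2 / (2 * \<epsilon>) \<le> \<phi> z - (norm (z - a))\<^sup>2 / (2 * \<epsilon>)"
  shows "(1 / \<epsilon>) *\<^sub>R (z - a) \<in> hadamard_superdiff \<phi> z"
proof (rule hadamard_superdiffI_quadratic)
  fix z' assume "norm (z' - z) < 1"
  moreover have "z' - a = (z - a) + (z' - z)" by simp
  ultimately show "\<phi> z' - \<phi> z \<le> ((1 / \<epsilon>) *\<^sub>R (z - a)) \<bullet> (z' - z) + 1 / (2 * \<epsilon>) * (norm (z' - z))\<^sup>2"
    using max[of z'] norm_add_power2_div_diff[of \<epsilon> "z - a" "z' - z"] \<epsilon> by simp
qed (use \<epsilon> in simp)

lemma penalized_slope_nonpos:
  fixes u v :: "'a::real_inner"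
  assumes \<epsilon>: "0 < \<epsilon>" and r: "0 < r"
    and max: "\<And>s. 0 < s \<Longrightarrow> s < r \<Longrightarrow> A * s - (norm (u - s *\<^sub>R v))\<^sup>2 / (2 * \<epsilon>) \<le> - (norm u)\<^sup>2 / (2 * \<epsilon>)"
  shows "A + ((1 / \<epsilon>) *\<^sub>R u) \<bullet> v \<le> 0"
proof (rule tendsto_lowerbound)
  show "((\<lambda>s. s * (norm v)\<^sup>2 / (2 * \<epsilon>)) \<longlongrightarrow> 0) (at_right 0)"
    by (intro tendsto_eq_intros) (use \<epsilon> in auto)
  have "A + ((1 / \<epsilon>) *\<^sub>R u) \<bullet> v \<le> s * (norm v)\<^sup>2 / (2 * \<epsilon>)" if s: "0 < s" "s < r" for s
  proof -
    have "s * (A + ((1 / \<epsilon>) *\<^sub>R u) \<bullet> v) \<le> s * (s * (norm v)\<^sup>2 / (2 * \<epsilon>))"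
      using max[OF s] norm_add_power2_div_diff[of \<epsilon> u "- s *\<^sub>R v"] \<epsilon>
      by (simp add: algebra_simps power2_eq_square)
    then show ?thesis using s(1) by (rule mult_left_le_imp_le)
  qed
  then show "\<forall>\<^sub>F s in at_right 0. A + ((1 / \<epsilon>) *\<^sub>R u) \<bullet> v \<le> s * (norm v)\<^sup>2 / (2 * \<epsilon>)"
    unfolding eventually_at_right_field using r by blast
qed simp

lemma segment_penalization_maximizer:
  fixes \<phi> :: "real^'d \<Rightarrow> real" and y v :: "real^'d" and A :: real
  assumes lip: "K-lipschitz_on UNIV \<phi>" and \<epsilon>: "0 < \<epsilon>" and h: "0 < h"
  defines "\<Theta> \<equiv> \<lambda>t z. \<phi> z + A * t - (norm (z - (y + t *\<^sub>R v)))\<^sup>2 / (2 * \<epsilon>)"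
  obtains t z where "0 \<le> t" "t \<le> h" "\<phi> y \<le> \<Theta> t z"
    and "norm (z - (y + t *\<^sub>R v)) \<le> 2 * K * \<epsilon>"
    and "(1 / \<epsilon>) *\<^sub>R (z - (y + t *\<^sub>R v)) \<in> hadamard_superdiff \<phi> z"
    and "t < h \<Longrightarrow> A + ((1 / \<epsilon>) *\<^sub>R (z - (y + t *\<^sub>R v))) \<bullet> v \<le> 0"
proof -
  have K: "0 \<le> K" using lip by (rule lipschitz_on_nonneg)
  define R where "R = 2 * K * \<epsilon> + h * norm v + 1"
  define S where "S = {0..h} \<times> cball y R"
  have cont: "continuous_on S (\<lambda>q. \<Theta> (fst q) (snd q))"
    unfolding \<Theta>_def using \<epsilon>
    by (intro continuous_intros continuous_on_compose2[OF lipschitz_on_continuous_on[OF lip]]) auto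
  have "compact S" unfolding S_def by (intro compact_Times) auto
  moreover have "(0, y) \<in> S" unfolding S_def R_def using h K \<epsilon> by simp
  then have "S \<noteq> {}" by blast
  ultimately obtain q where "q \<in> S" "\<forall>q'\<in>S. \<Theta> (fst q') (snd q') \<le> \<Theta> (fst q) (snd q)"
    using continuous_attains_sup[OF _ _ cont] by blast
  then obtain t z where tz: "(t, z) \<in> S" and max: "\<And>t' z'. (t', z') \<in> S \<Longrightarrow> \<Theta> t' z' \<le> \<Theta> t z"
    by (metis fst_conv prod.collapse snd_conv)
  define u where "u = z - (y + t *\<^sub>R v)"
  define p where "p = (1 / \<epsilon>) *\<^sub>R u"
  have t: "0 \<le> t" "t \<le> h" using tz unfolding S_def by auto
  have tv: "norm (t *\<^sub>R v) \<le> h * norm v" using t by (simp add: mult_right_mono)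
  have "0 \<le> 2 * K * \<epsilon>" using K \<epsilon> by simp
  then have "(t, y + t *\<^sub>R v) \<in> S" unfolding S_def R_def using t tv by (auto simp: dist_norm)
  then have "(norm u)\<^sup>2 / (2 * \<epsilon>) \<le> \<phi> z - \<phi> (y + t *\<^sub>R v)"
    using max unfolding \<Theta>_def u_def by fastforce
  also have "\<dots> \<le> K * norm u"
    using lipschitz_onD[OF lip UNIV_I UNIV_I, of z "y + t *\<^sub>R v"] unfolding u_def by (simp add: dist_real_def dist_norm)
  finally have "norm u * norm u \<le> (2 * K * \<epsilon>) * norm u" using \<epsilon> by (simp add: divide_le_eq power2_eq_square algebra_simps)
  then have u: "norm u \<le> 2 * K * \<epsilon>"
    using K \<epsilon> by (cases "norm u = 0") (auto intro: mult_right_le_imp_le)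
  have zy: "norm (z - y) \<le> 2 * K * \<epsilon> + h * norm v"
    using norm_triangle_ineq[of u "t *\<^sub>R v"] u tv unfolding u_def by simp
  have "p \<in> hadamard_superdiff \<phi> z"
    unfolding p_def u_def
  proof (rule hadamard_superdiffI_touching_paraboloid[OF \<epsilon>])
    fix z' assume "norm (z' - z) < 1"
    then have "norm (z' - y) \<le> R"
      using norm_triangle_ineq[of "z' - z" "z - y"] zy unfolding R_def by simp
    then have "\<Theta> t z' \<le> \<Theta> t z" using max t unfolding S_def by (simp add: dist_norm norm_minus_commute)
    then show "\<phi> z' - (norm (z' - (y + t *\<^sub>R v)))\<^sup>2 / (2 * \<epsilon>) \<le> \<phi> z - (norm (z - (y + t *\<^sub>R v)))\<^sup>2 / (2 * \<epsilon>)"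
      unfolding \<Theta>_def by simp
  qed
  moreover have "A + p \<bullet> v \<le> 0" if "t < h"
    unfolding p_def
  proof (rule penalized_slope_nonpos[OF \<epsilon>])
    show "0 < h - t" using that by simp
    fix s assume "0 < s" "s < h - t"
    then have "\<Theta> (t + s) z \<le> \<Theta> t z" using max tz unfolding S_def by auto
    moreover have "z - (y + (t + s) *\<^sub>R v) = u - s *\<^sub>R v" by (simp add: u_def algebra_simps)
    ultimately show "A * s - (norm (u - s *\<^sub>R v))\<^sup>2 / (2 * \<epsilon>) \<le> - (norm u)\<^sup>2 / (2 * \<epsilon>)"
      unfolding \<Theta>_def u_def by (simp add: algebra_simps)
  qed
  moreover have "\<phi> y \<le> \<Theta> t z" using max[of 0 y] h K \<epsilon> unfolding S_def R_def \<Theta>_def by simp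
  ultimately show thesis using that t u unfolding p_def u_def by blast
qed

lemma lipschitz_decrease_along_segment:
  fixes \<phi> :: "real^'d \<Rightarrow> real"
  assumes lip: "K-lipschitz_on UNIV \<phi>" and h: "0 < h" and r: "0 < r"
    and rate: "\<And>t z p. 0 \<le> t \<Longrightarrow> t \<le> h \<Longrightarrow> norm (z - (y + t *\<^sub>R v)) \<le> r \<Longrightarrow>
                 p \<in> hadamard_superdiff \<phi> z \<Longrightarrow> - (p \<bullet> v) \<le> B"
  shows "\<phi> y - \<phi> (y + h *\<^sub>R v) \<le> h * B"
proof (rule field_le_epsilon)
  fix e :: real assume e: "0 < e"
  have K: "0 \<le> K" using lip by (rule lipschitz_on_nonneg)
  define A where "A = B + e / (2 * h)"
  define \<epsilon> where "\<epsilon> = min (r / (2 * K + 1)) (e / (4 * K\<^sup>2 + 2))"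
  have pos: "0 < 2 * K + 1" "0 < 4 * K\<^sup>2 + 2" using K by (simp_all add: add_nonneg_pos)
  then have \<epsilon>: "0 < \<epsilon>" unfolding \<epsilon>_def using r e by simp
  have "\<epsilon> \<le> r / (2 * K + 1)" "\<epsilon> \<le> e / (4 * K\<^sup>2 + 2)" unfolding \<epsilon>_def by simp_all
  then have "(2 * K + 1) * \<epsilon> \<le> r" "(4 * K\<^sup>2 + 2) * \<epsilon> \<le> e"
    using pos by (simp_all add: pos_le_divide_eq mult.commute)
  then have \<epsilon>r: "2 * K * \<epsilon> \<le> r" and \<epsilon>e: "2 * K\<^sup>2 * \<epsilon> \<le> e / 2"
    using \<epsilon> by (simp_all add: algebra_simps)
  obtain t z where t: "0 \<le> t" "t \<le> h"
    and max: "\<phi> y \<le> \<phi> z + A * t - (norm (z - (y + t *\<^sub>R v)))\<^sup>2 / (2 * \<epsilon>)"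
    and u: "norm (z - (y + t *\<^sub>R v)) \<le> 2 * K * \<epsilon>"
    and p: "(1 / \<epsilon>) *\<^sub>R (z - (y + t *\<^sub>R v)) \<in> hadamard_superdiff \<phi> z"
    and slope: "t < h \<Longrightarrow> A + ((1 / \<epsilon>) *\<^sub>R (z - (y + t *\<^sub>R v))) \<bullet> v \<le> 0"
    by (rule segment_penalization_maximizer[OF lip \<epsilon> h, of y A v]) blast
  have rate_z: "- (((1 / \<epsilon>) *\<^sub>R (z - (y + t *\<^sub>R v))) \<bullet> v) \<le> B"
    using rate[OF t _ p] u \<epsilon>r by linarith
  have "\<not> t < h"
  proof
    assume "t < h"
    with slope rate_z have "A \<le> B" by fastforce
    moreover have "0 < e / (2 * h)" using e h by simp
    ultimately show False unfolding A_def by simp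
  qed
  with t have "t = h" by simp
  have "\<phi> z - \<phi> (y + h *\<^sub>R v) \<le> K * norm (z - (y + h *\<^sub>R v))"
    using lipschitz_onD[OF lip UNIV_I UNIV_I, of z "y + h *\<^sub>R v"] by (simp add: dist_real_def dist_norm)
  also have "\<dots> \<le> K * (2 * K * \<epsilon>)" using u K \<open>t = h\<close> by (intro mult_left_mono) auto
  finally have "\<phi> z - \<phi> (y + h *\<^sub>R v) \<le> e / 2" using \<epsilon>e by (simp add: power2_eq_square algebra_simps)
  moreover have "0 \<le> (norm (z - (y + h *\<^sub>R v)))\<^sup>2 / (2 * \<epsilon>)" using \<epsilon> by simp
  then have "\<phi> y \<le> \<phi> z + A * h" using max \<open>t = h\<close> by simp
  moreover have "A * h = h * B + e / 2" using h unfolding A_def by (simp add: field_simps)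
  ultimately show "\<phi> y - \<phi> (y + h *\<^sub>R v) \<le> h * B + e" by linarith
qed

section \<open>Mollification\<close>

definition mollifier :: "(real^'d \<Rightarrow> real) \<Rightarrow> bool" where
  "mollifier \<eta> \<longleftrightarrow> continuous_on UNIV \<eta> \<and> (\<forall>w. 0 \<le> \<eta> w) \<and> (\<forall>w. norm w > 1 \<longrightarrow> \<eta> w = 0) \<and>
     (\<eta> has_integral 1) UNIV"

definition scaled_kernel :: "(real^'d \<Rightarrow> real) \<Rightarrow> real \<Rightarrow> real^'d \<Rightarrow> real" where
  "scaled_kernel \<eta> \<delta> w = inverse (\<delta> ^ CARD('d)) * \<eta> (inverse \<delta> *\<^sub>R w)"

lemma mollify_eq_integral_scaled_kernel:
  "mollify \<eta> \<delta> \<phi> x = integral UNIV (\<lambda>w. \<phi> (x - w) * scaled_kernel \<eta> \<delta> w)"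
  by (simp add: mollify_def scaled_kernel_def)

lemma smooth_fun_imp_continuous_on: "smooth_fun f \<Longrightarrow> continuous_on UNIV f"
  by (auto elim: smooth_fun.cases intro: continuous_at_imp_continuous_on differentiable_imp_continuous_within)

lemma norm_gt_if_notin_cube:
  assumes "(w::real^'d) \<notin> cbox (- (\<chi> i. r)) (\<chi> i. r)"
  shows "r < norm w"
proof -
  from assms obtain i where "\<not> (- r \<le> w $ i \<and> w $ i \<le> r)" unfolding mem_box_cart by auto
  then have "r < \<bar>w $ i\<bar>" by auto
  also have "\<dots> \<le> norm w" by (rule component_le_norm_cart)
  finally show ?thesis .
qed

lemma has_integral_UNIV_iff_cube:
  fixes f :: "real^'d \<Rightarrow> real"
  assumes "\<And>w. r < norm w \<Longrightarrow> f w = 0"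
  shows "(f has_integral I) UNIV \<longleftrightarrow> (f has_integral I) (cbox (- (\<chi> i. r)) (\<chi> i. r))"
proof -
  have "(\<lambda>w. if w \<in> cbox (- (\<chi> i. r)) (\<chi> i. r) then f w else 0) = f"
    using assms norm_gt_if_notin_cube by fastforce
  then show ?thesis using has_integral_restrict_UNIV by metis
qed

lemma scaled_kernel_nonneg: "mollifier \<eta> \<Longrightarrow> 0 < \<delta> \<Longrightarrow> 0 \<le> scaled_kernel \<eta> \<delta> w"
  by (simp add: mollifier_def scaled_kernel_def)

lemma scaled_kernel_eq_0:
  assumes "mollifier \<eta>" "0 < \<delta>" "\<delta> < norm w"
  shows "scaled_kernel \<eta> \<delta> w = 0"
proof -
  have "1 < norm (inverse \<delta> *\<^sub>R w)" using assms(2,3) by (simp add: field_simps)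
  then show ?thesis using assms(1) by (simp add: mollifier_def scaled_kernel_def)
qed

lemma has_integral_scaled_kernel:
  fixes \<eta> :: "real^'d \<Rightarrow> real"
  assumes \<eta>: "mollifier \<eta>" and \<delta>: "0 < \<delta>"
  shows "(scaled_kernel \<eta> \<delta> has_integral 1) UNIV"
proof -
  have "\<And>w. 1 < norm w \<Longrightarrow> \<eta> w = 0" "(\<eta> has_integral 1) UNIV" using \<eta> by (auto simp: mollifier_def)
  then have "(\<eta> has_integral 1) (cbox (- (\<chi> i. 1)) (\<chi> i. 1))" using has_integral_UNIV_iff_cube by blast
  from has_integral_affinity'[OF this, of "inverse \<delta>" 0]
  have "((\<lambda>w. \<eta> (inverse \<delta> *\<^sub>R w)) has_integral \<delta> ^ CARD('d)) (cbox (- (\<chi> i. \<delta>)) (\<chi> i. \<delta>))"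
    using \<delta> by (simp add: power_inverse scaleR_vec_def uminus_vec_def)
  moreover have "\<eta> (inverse \<delta> *\<^sub>R w) = 0" if "\<delta> < norm w" for w
    using scaled_kernel_eq_0[OF \<eta> \<delta> that] \<delta> by (simp add: scaled_kernel_def)
  ultimately have "((\<lambda>w. \<eta> (inverse \<delta> *\<^sub>R w)) has_integral \<delta> ^ CARD('d)) UNIV"
    using has_integral_UNIV_iff_cube[of \<delta> "\<lambda>w. \<eta> (inverse \<delta> *\<^sub>R w)"] by simp
  from has_integral_mult_right[OF this, of "inverse (\<delta> ^ CARD('d))"] show ?thesis
    using \<delta> by (simp add: scaled_kernel_def[abs_def])
qed

lemma mollify_integrand_integrable:
  fixes \<phi> :: "real^'d \<Rightarrow> real"
  assumes \<phi>: "continuous_on UNIV \<phi>" and \<eta>: "mollifier \<eta>" and \<delta>: "0 < \<delta>"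
  shows "(\<lambda>w. \<phi> (x - w) * scaled_kernel \<eta> \<delta> w) integrable_on UNIV"
proof (rule integrable_on_superset[OF _ _ subset_UNIV])
  have "continuous_on UNIV \<eta>" using \<eta> by (simp add: mollifier_def)
  then have "continuous_on UNIV (\<lambda>w. \<eta> (inverse \<delta> *\<^sub>R w))"
    by (rule continuous_on_compose2) (auto intro: continuous_intros)
  moreover have "continuous_on UNIV (\<lambda>w. \<phi> (x - w))"
    using \<phi> by (rule continuous_on_compose2) (auto intro: continuous_intros)
  ultimately have "continuous_on UNIV (\<lambda>w. \<phi> (x - w) * scaled_kernel \<eta> \<delta> w)"
    unfolding scaled_kernel_def by (intro continuous_intros)
  then show "(\<lambda>w. \<phi> (x - w) * scaled_kernel \<eta> \<delta> w) integrable_on cbox (- (\<chi> i. \<delta>)) (\<chi> i. \<delta>)"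
    by (rule integrable_continuous[OF continuous_on_subset]) simp
  show "\<phi> (x - w) * scaled_kernel \<eta> \<delta> w = 0" if "w \<notin> cbox (- (\<chi> i. \<delta>)) (\<chi> i. \<delta>)" for w
    using scaled_kernel_eq_0[OF \<eta> \<delta> norm_gt_if_notin_cube[OF that]] by simp
qed

lemma mollify_diff_le:
  fixes \<phi> :: "real^'d \<Rightarrow> real"
  assumes \<phi>: "continuous_on UNIV \<phi>" and \<eta>: "mollifier \<eta>" and \<delta>: "0 < \<delta>"
    and C: "\<And>w. norm w \<le> \<delta> \<Longrightarrow> \<phi> (a - w) - \<phi> (b - w) \<le> C"
  shows "mollify \<eta> \<delta> \<phi> a - mollify \<eta> \<delta> \<phi> b \<le> C"
proof -
  let ?k = "scaled_kernel \<eta> \<delta>"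
  have "mollify \<eta> \<delta> \<phi> a - mollify \<eta> \<delta> \<phi> b = integral UNIV (\<lambda>w. \<phi> (a - w) * ?k w - \<phi> (b - w) * ?k w)"
    unfolding mollify_eq_integral_scaled_kernel
    by (rule integral_diff[symmetric]) (intro mollify_integrand_integrable[OF \<phi> \<eta> \<delta>])+
  also have "\<dots> \<le> integral UNIV (\<lambda>w. C * ?k w)"
  proof (rule integral_le)
    show "(\<lambda>w. \<phi> (a - w) * ?k w - \<phi> (b - w) * ?k w) integrable_on UNIV"
      by (intro integrable_diff mollify_integrand_integrable[OF \<phi> \<eta> \<delta>])
    show "(\<lambda>w. C * ?k w) integrable_on UNIV"
      using has_integral_mult_right[OF has_integral_scaled_kernel[OF \<eta> \<delta>]] by blast
    show "\<phi> (a - w) * ?k w - \<phi> (b - w) * ?k w \<le> C * ?k w" for w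
    proof (cases "norm w \<le> \<delta>")
      case True
      then have "(\<phi> (a - w) - \<phi> (b - w)) * ?k w \<le> C * ?k w"
        using C scaled_kernel_nonneg[OF \<eta> \<delta>] by (intro mult_right_mono)
      then show ?thesis by (simp add: left_diff_distrib)
    qed (simp add: scaled_kernel_eq_0[OF \<eta> \<delta>])
  qed
  also have "\<dots> = C"
    using integral_unique[OF has_integral_mult_right[OF has_integral_scaled_kernel[OF \<eta> \<delta>], of C]] by simp
  finally show ?thesis .
qed

lemma lipschitz_on_UNIV_realI:
  fixes f :: "'a::metric_space \<Rightarrow> real"
  assumes "0 \<le> K" and "\<And>a b. f a - f b \<le> K * dist a b"
  shows "K-lipschitz_on UNIV f"
proof (rule lipschitz_onI)
  fix a b
  show "dist (f a) (f b) \<le> K * dist a b"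
    using assms(2)[of a b] assms(2)[of b a] by (simp add: dist_real_def dist_commute abs_le_iff)
qed (rule assms(1))

lemma lipschitz_on_mollify:
  fixes \<phi> :: "real^'d \<Rightarrow> real"
  assumes lip: "K-lipschitz_on UNIV \<phi>" and \<eta>: "mollifier \<eta>" and \<delta>: "0 < \<delta>"
  shows "K-lipschitz_on UNIV (mollify \<eta> \<delta> \<phi>)"
proof (rule lipschitz_on_UNIV_realI)
  show "0 \<le> K" using lip by (rule lipschitz_on_nonneg)
  fix a b :: "real^'d"
  show "mollify \<eta> \<delta> \<phi> a - mollify \<eta> \<delta> \<phi> b \<le> K * dist a b"
  proof (rule mollify_diff_le[OF lipschitz_on_continuous_on[OF lip] \<eta> \<delta>])
    fix w :: "real^'d"
    have "\<phi> (a - w) - \<phi> (b - w) \<le> K * dist (a - w) (b - w)"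
      using lipschitz_onD[OF lip UNIV_I UNIV_I, of "a - w" "b - w"] by (simp add: dist_real_def)
    then show "\<phi> (a - w) - \<phi> (b - w) \<le> K * dist a b" by (simp add: dist_norm)
  qed
qed

section \<open>The Hamiltonian\<close>

lemma continuous_on_imp_upper_semicont: "continuous_on UNIV f \<Longrightarrow> upper_semicont f"
  unfolding upper_semicont_def by (intro allI open_Collect_less continuous_on_const)

lemma bdd_above_Ham_range:
  fixes L :: "real^'d \<Rightarrow> real^'d \<Rightarrow> real"
  assumes L_cont: "continuous_on UNIV (\<lambda>(x, v). L x v)"
    and L_per: "\<forall>v. periodic_fun (\<lambda>x. L x v)"
    and L_superlin: "filterlim (\<lambda>v. (INF x. L x v) / norm v) at_top at_infinity"
  shows "bdd_above (range (\<lambda>v. q \<bullet> v - L z v))"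
proof -
  have "\<forall>\<^sub>F v in at_infinity. norm q + 1 \<le> (INF x. L x v) / norm v"
    using L_superlin unfolding filterlim_at_top by blast
  then obtain b where b: "\<And>v. b \<le> norm v \<Longrightarrow> norm q + 1 \<le> (INF x. L x v) / norm v"
    unfolding eventually_at_infinity by blast
  define b' where "b' = max b 1"
  obtain B where B: "\<And>x v. norm v \<le> b' \<Longrightarrow> \<bar>L x v\<bar> \<le> B"
    using periodic_continuous_bounded[OF L_cont L_per] by blast
  show ?thesis
  proof (rule bdd_aboveI2)
    fix v :: "real^'d"
    have qv: "q \<bullet> v \<le> norm q * norm v" by (rule norm_cauchy_schwarz)
    show "q \<bullet> v - L z v \<le> max 0 (norm q * b' + B)"
    proof (cases "norm v \<le> b'")
      case True
      then have "norm q * norm v \<le> norm q * b'" by (simp add: mult_left_mono)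
      then show ?thesis using qv B[OF True, of z] by linarith
    next
      case False
      then have v: "0 < norm v" "b \<le> norm v" unfolding b'_def by auto
      obtain B' where B': "\<And>x w. norm w \<le> norm v \<Longrightarrow> \<bar>L x w\<bar> \<le> B'"
        using periodic_continuous_bounded[OF L_cont L_per] by blast
      have "bdd_below (range (\<lambda>x. L x v))"
      proof (rule bdd_belowI2)
        show "- B' \<le> L x v" for x using B'[of v x] by linarith
      qed
      then have "(INF x. L x v) \<le> L z v" by (rule cINF_lower) simp
      moreover have "(norm q + 1) * norm v \<le> (INF x. L x v)"
        using b[OF v(2)] v(1) by (simp add: le_divide_eq)
      moreover have "(norm q + 1) * norm v = norm q * norm v + norm v" by (simp add: algebra_simps)
      moreover have "0 \<le> max 0 (norm q * b' + B)" by simp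
      ultimately show ?thesis using qv v(1) by linarith
    qed
  qed
qed

lemma subsolution_superdiff_bound:
  fixes L :: "real^'d \<Rightarrow> real^'d \<Rightarrow> real"
  assumes L_cont: "continuous_on UNIV (\<lambda>(x, v). L x v)"
    and L_per: "\<forall>v. periodic_fun (\<lambda>x. L x v)"
    and L_superlin: "filterlim (\<lambda>v. (INF x. L x v) / norm v) at_top at_infinity"
    and sub: "subsolution L \<phi> c" and p: "p \<in> hadamard_superdiff \<phi> z"
  shows "- (p \<bullet> v) - L z v \<le> c"
proof -
  have "(- p) \<bullet> v - L z v \<le> Ham L z (- p)"
    unfolding Ham_def by (rule cSUP_upper[OF _ bdd_above_Ham_range[OF L_cont L_per L_superlin]]) simp
  also have "\<dots> \<le> c" using sub p unfolding subsolution_def by blast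
  finally show ?thesis by simp
qed

lemma abs_diff_le_omega:
  fixes L :: "real^'d \<Rightarrow> real^'d \<Rightarrow> real"
  assumes L_cont: "continuous_on UNIV (\<lambda>(x, v). L x v)"
    and L_per: "\<forall>v. periodic_fun (\<lambda>x. L x v)"
    and "torus_dist x y \<le> \<delta>" "norm v \<le> A"
  shows "\<bar>L x v - L y v\<bar> \<le> omega L A \<delta>"
  unfolding omega_def
proof (rule cSup_upper)
  obtain B where B: "\<And>x v. norm v \<le> A \<Longrightarrow> \<bar>L x v\<bar> \<le> B"
    using periodic_continuous_bounded[OF L_cont L_per] by blast
  show "bdd_above {\<bar>L x v - L y v\<bar> | x y v. torus_dist x y \<le> \<delta> \<and> norm v \<le> A}"
  proof (rule bdd_aboveI[of _ "2 * B"])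
    fix a assume "a \<in> {\<bar>L x v - L y v\<bar> | x y v. torus_dist x y \<le> \<delta> \<and> norm v \<le> A}"
    then obtain x' y' v' where "a = \<bar>L x' v' - L y' v'\<bar>" "norm v' \<le> A" by blast
    then show "a \<le> 2 * B" using B[of v' x'] B[of v' y'] by linarith
  qed
qed (use assms in blast)

lemma L_le_add_omega_nearby:
  fixes L :: "real^'d \<Rightarrow> real^'d \<Rightarrow> real"
  assumes L_cont: "continuous_on UNIV (\<lambda>(x, v). L x v)"
    and L_per: "\<forall>v. periodic_fun (\<lambda>x. L x v)"
    and v: "norm v \<le> A" and e: "0 < e"
  obtains \<rho> where "0 < \<rho>"
    "\<And>w z. norm w \<le> \<delta> \<Longrightarrow> norm (z - (x - w)) \<le> \<rho> \<Longrightarrow> L z v \<le> L x v + omega L A \<delta> + e"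
proof -
  have "continuous_on UNIV (\<lambda>a. (a, v))" by (intro continuous_intros)
  then have "continuous_on UNIV (\<lambda>a. L a v)"
    using continuous_on_compose2[OF L_cont] by fastforce
  then have "uniformly_continuous_on (cball x (\<delta> + 1)) (\<lambda>a. L a v)"
    by (rule compact_uniformly_continuous[OF continuous_on_subset[OF _ subset_UNIV] compact_cball])
  then obtain r where r: "0 < r"
    "\<forall>a \<in> cball x (\<delta> + 1). \<forall>b \<in> cball x (\<delta> + 1). dist b a < r \<longrightarrow> dist (L b v) (L a v) < e"
    unfolding uniformly_continuous_on_def using e by blast
  show ?thesis
  proof
    show "0 < min (r / 2) 1" using r by simp
    fix w z assume w: "norm w \<le> \<delta>" and z: "norm (z - (x - w)) \<le> min (r / 2) 1"
    have "norm (x - z) \<le> norm (z - (x - w)) + norm w"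
      using norm_triangle_ineq[of "x - w - z" w] by (simp add: norm_minus_commute)
    then have "dist (L z v) (L (x - w) v) < e"
      using r(2)[rule_format, of "x - w" z] r(1) w z by (simp add: dist_norm norm_minus_commute)
    moreover have "\<bar>L (x - w) v - L x v\<bar> \<le> omega L A \<delta>"
      using abs_diff_le_omega[OF L_cont L_per _ v] torus_dist_le_norm[of "x - w" x] w by simp
    ultimately show "L z v \<le> L x v + omega L A \<delta> + e" by (simp add: dist_real_def)
  qed
qed

lemma mollify_superdiff_velocity_bound:
  fixes L :: "real^'d \<Rightarrow> real^'d \<Rightarrow> real" and \<phi> \<eta> :: "real^'d \<Rightarrow> real"
  assumes L_cont: "continuous_on UNIV (\<lambda>(x, v). L x v)"
    and L_per: "\<forall>v. periodic_fun (\<lambda>x. L x v)"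
    and lip: "K-lipschitz_on UNIV \<phi>"
    and rate: "\<And>z q. q \<in> hadamard_superdiff \<phi> z \<Longrightarrow> - (q \<bullet> v) - L z v \<le> c"
    and \<eta>: "mollifier \<eta>" and \<delta>: "0 < \<delta>"
    and p: "p \<in> hadamard_superdiff (mollify \<eta> \<delta> \<phi>) x" and v: "norm v \<le> A"
  shows "- (p \<bullet> v) - L x v \<le> c + omega L A \<delta>"
proof -
  let ?W = "omega L A \<delta>"
  have "- (p \<bullet> v) \<le> c + L x v + ?W"
  proof (rule hadamard_superdiff_neg_inner_le_rate[OF p])
    fix e :: real assume e: "0 < e"
    obtain \<rho> where \<rho>: "0 < \<rho>"
      and near: "\<And>w z. norm w \<le> \<delta> \<Longrightarrow> norm (z - (x - w)) \<le> \<rho> \<Longrightarrow> L z v \<le> L x v + ?W + e"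
      using L_le_add_omega_nearby[OF L_cont L_per v e] by blast
    have bound: "mollify \<eta> \<delta> \<phi> x - mollify \<eta> \<delta> \<phi> (x + h *\<^sub>R v) \<le> h * (c + L x v + ?W + e)"
      if h: "0 < h" "h * norm v < \<rho> / 2" for h
    proof (rule mollify_diff_le[OF lipschitz_on_continuous_on[OF lip] \<eta> \<delta>])
      fix w :: "real^'d" assume w: "norm w \<le> \<delta>"
      have "\<phi> (x - w) - \<phi> (x - w + h *\<^sub>R v) \<le> h * (c + L x v + ?W + e)"
      proof (rule lipschitz_decrease_along_segment[OF lip h(1)])
        show "0 < \<rho> / 2" using \<rho> by simp
        fix t z q assume t: "0 \<le> t" "t \<le> h" and z: "norm (z - (x - w + t *\<^sub>R v)) \<le> \<rho> / 2"
          and q: "q \<in> hadamard_superdiff \<phi> z"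
        have "norm (t *\<^sub>R v) \<le> h * norm v" using t by (simp add: mult_right_mono)
        moreover have "z - (x - w) = (z - (x - w + t *\<^sub>R v)) + t *\<^sub>R v" by simp
        then have "norm (z - (x - w)) \<le> norm (z - (x - w + t *\<^sub>R v)) + norm (t *\<^sub>R v)"
          by (metis norm_triangle_ineq)
        ultimately have "norm (z - (x - w)) \<le> \<rho>" using z h(2) by linarith
        then show "- (q \<bullet> v) \<le> c + L x v + ?W + e" using rate[OF q] near[OF w] by fastforce
      qed
      then show "\<phi> (x - w) - \<phi> (x + h *\<^sub>R v - w) \<le> h * (c + L x v + ?W + e)"
        by (simp add: algebra_simps)
    qed
    have "((\<lambda>h. h * norm v) \<longlongrightarrow> 0) (at_right 0)" by (intro tendsto_eq_intros) auto
    then have "\<forall>\<^sub>F h in at_right 0. h * norm v < \<rho> / 2" using \<rho> by (intro order_tendstoD) auto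
    with eventually_at_right_less
    show "\<forall>\<^sub>F h in at_right 0. mollify \<eta> \<delta> \<phi> x - mollify \<eta> \<delta> \<phi> (x + h *\<^sub>R v) \<le> h * (c + L x v + ?W + e)"
      by eventually_elim (rule bound)
  qed
  then show ?thesis by simp
qed

lemma Ham_le_if_bounded_on_small_velocities:
  fixes L :: "real^'d \<Rightarrow> real^'d \<Rightarrow> real"
  assumes L_cont: "continuous_on UNIV (\<lambda>(x, v). L x v)"
    and L_per: "\<forall>v. periodic_fun (\<lambda>x. L x v)"
    and p: "norm p \<le> K"
    and c_prop: "\<forall>x v. norm v \<ge> c \<longrightarrow> L x v \<ge> (K + (SUP y. \<bar>L y 0\<bar>) + 1) * norm v"
    and small: "\<And>v. norm v \<le> max c 1 \<Longrightarrow> - (p \<bullet> v) - L x v \<le> B"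
  shows "Ham L x (- p) \<le> B"
  unfolding Ham_def
proof (rule cSUP_least)
  fix v :: "real^'d"
  obtain B0 where B0: "\<And>y v. norm v \<le> 0 \<Longrightarrow> \<bar>L y v\<bar> \<le> B0"
    using periodic_continuous_bounded[OF L_cont L_per] by blast
  have "bdd_above (range (\<lambda>y. \<bar>L y 0\<bar>))" by (intro bdd_aboveI2[where M = B0]) (simp add: B0)
  then have S: "\<bar>L x 0\<bar> \<le> (SUP y. \<bar>L y 0\<bar>)" by (rule cSUP_upper[rotated]) simp
  show "(- p) \<bullet> v - L x v \<le> B"
  proof (cases "norm v \<le> max c 1")
    case False
    then have v: "1 \<le> norm v" "c \<le> norm v" by auto
    define S where "S = (SUP y. \<bar>L y 0\<bar>)"
    have "(- p) \<bullet> v \<le> norm p * norm v" using norm_cauchy_schwarz[of "- p" v] by simp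
    also have "\<dots> \<le> K * norm v" using p by (intro mult_right_mono) auto
    finally have "(- p) \<bullet> v \<le> K * norm v" .
    moreover have "K * norm v + (S + 1) * norm v \<le> L x v"
      using c_prop v(2) unfolding S_def by (auto simp: algebra_simps)
    moreover have "0 \<le> S + 1" using S abs_ge_zero[of "L x 0"] unfolding S_def by linarith
    then have "(S + 1) * 1 \<le> (S + 1) * norm v" using v(1) by (intro mult_left_mono)
    then have "S + 1 \<le> (S + 1) * norm v" by simp
    moreover have "- L x 0 \<le> B" using small[of 0] by simp
    ultimately show ?thesis using S abs_ge_self[of "L x 0"] unfolding S_def by linarith
  qed (use small in simp)
qed simp

theorem lemma1:
  fixes L :: "real^'d \<Rightarrow> real^'d \<Rightarrow> real"
    and \<phi> \<eta> :: "real^'d \<Rightarrow> real"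
    and Hbar K c \<delta> :: real
  assumes L_cont: "continuous_on UNIV (\<lambda>(x, v). L x v)"
    and L_per: "\<forall>v. periodic_fun (\<lambda>x. L x v)"
    and L_superlin: "filterlim (\<lambda>v. (INF x. L x v) / norm v) at_top at_infinity"
    and sub: "subsolution L \<phi> Hbar"
    and \<phi>_per: "periodic_fun \<phi>"
    and \<phi>_lip: "\<forall>x y. \<bar>\<phi> x - \<phi> y\<bar> \<le> K * torus_dist x y"
    and \<eta>_smooth: "smooth_fun \<eta>"
    and \<eta>_nonneg: "\<forall>w. 0 \<le> \<eta> w"
    and \<eta>_supp: "\<forall>w. norm w > 1 \<longrightarrow> \<eta> w = 0"
    and \<eta>_int: "(\<eta> has_integral 1) UNIV"
    and c_nonneg: "0 \<le> c"
    and c_prop: "\<forall>x v. norm v \<ge> c \<longrightarrow>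
                   L x v \<ge> (K + (SUP y. \<bar>L y 0\<bar>) + 1) * norm v"
    and \<delta>_pos: "0 < \<delta>"
  shows "subsolution L (mollify \<eta> \<delta> \<phi>) (Hbar + omega L (max c 1) \<delta>)"
proof -
  have lip: "K-lipschitz_on UNIV \<phi>" using \<phi>_lip by (rule torus_lipschitz_imp_lipschitz_on)
  have \<eta>: "mollifier \<eta>"
    unfolding mollifier_def using smooth_fun_imp_continuous_on[OF \<eta>_smooth] \<eta>_nonneg \<eta>_supp \<eta>_int by blast
  have lip_mollify: "K-lipschitz_on UNIV (mollify \<eta> \<delta> \<phi>)" by (rule lipschitz_on_mollify[OF lip \<eta> \<delta>_pos])
  have rate: "- (q \<bullet> v) - L z v \<le> Hbar" if "q \<in> hadamard_superdiff \<phi> z" for z q v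
    by (rule subsolution_superdiff_bound[OF L_cont L_per L_superlin sub that])
  show ?thesis
    unfolding subsolution_def
  proof (intro conjI allI ballI)
    show "upper_semicont (mollify \<eta> \<delta> \<phi>)"
      by (rule continuous_on_imp_upper_semicont[OF lipschitz_on_continuous_on[OF lip_mollify]])
    fix x p assume p: "p \<in> hadamard_superdiff (mollify \<eta> \<delta> \<phi>) x"
    show "Ham L x (- p) \<le> Hbar + omega L (max c 1) \<delta>"
    proof (rule Ham_le_if_bounded_on_small_velocities[OF L_cont L_per _ c_prop])
      show "norm p \<le> K" by (rule hadamard_superdiff_norm_le_lipschitz[OF lip_mollify p])
      show "- (p \<bullet> v) - L x v \<le> Hbar + omega L (max c 1) \<delta>" if "norm v \<le> max c 1" for v
        by (rule mollify_superdiff_velocity_bound[OF L_cont L_per lip rate \<eta> \<delta>_pos p that])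
    qed
  qed
qed

end
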